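(* Let $\mathcal{E}$ be a differentially connected equation and $\tau\colon\tilde{\mathcal{E}}\to\mathcal{E}$ an irreducible finite-dimensional Abelian covering. Then: (1) if $\dim_{\mathbb{R}}\mathrm{CL}(\mathcal{E})=\infty$, then $\dim_{\mathbb{R}}\mathrm{CL}(\tilde{\mathcal{E}})=\infty$; (2) if $\mathrm{sym}\,\mathcal{E}$ is infinite-dimensional, then $\tilde{\mathcal{E}}$ has an infinite-dimensional space of symmetries or an infinite-dimensional space $\mathrm{CL}(\tilde{\mathcal{E}})$ (or both).
   Context: Setting: $\mathcal{E}$ is an infinitely prolonged equation with two independent variables $x,y$ and commuting total derivatives $D_x,D_y$; differentially connected means $D_xh=D_yh=0$ has only constant solutions. Symmetries are $\pi_\infty$-vertical vector fields commuting with $D_x,D_y$, forming $\mathrm{sym}\,\mathcal{E}$. Conservation laws are horizontal 1-forms $X\,dx+Y\,dy$ with $D_xY=D_yX$, modulo trivial ones $D_xP\,dx+D_yP\,dy$, forming $\mathrm{CL}(\mathcal{E})$. A covering $\tau\colon\tilde{\mathcal{E}}\to\mathcal{E}$ of finite rank $r$ has fiber coordinates $w^1,\dots,w^r$ and commuting total derivatives $\tilde D_x=D_x+\sum X^\alpha\partial/\partial w^\alpha$, $\tilde D_y=D_y+\sum Y^\alpha\partial/\partial w^\alpha$; it is Abelian if the coordinates can be chosen with $X^\alpha,Y^\alpha\in\mathcal{F}(\mathcal{E})$, and irreducible if $\tilde D_xh=\tilde D_yh=0$ has only constant solutions on $\tilde{\mathcal{E}}$. Symmetries and conservation laws of $\tilde{\mathcal{E}}$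 are defined in the same way with $\tilde D_x,\tilde D_y$ (symmetries being vector fields on $\tilde{\mathcal{E}}$ vertical over $M$). *)

theory Defs
  imports Complex_Main
begin

text \<open>Abstract algebraic model (Krasil'shchik--Vinogradov style) of an infinitely
prolonged equation with two independent variables: the function algebra F(E) is a
commutative real algebra (type 'a), total derivatives are commuting derivations,
vector fields are derivations of the function algebra.\<close>

definition derivation :: "('a::{real_algebra_1,comm_ring_1} \<Rightarrow> 'a) \<Rightarrow> bool" where
  "derivation D \<longleftrightarrow> linear D \<and> (\<forall>a b. D (a * b) = a * D b + D a * b)"

definition total_derivs :: "('a::{real_algebra_1,comm_ring_1} \<Rightarrow> 'a) \<Rightarrow> ('a \<Rightarrow> 'a) \<Rightarrow> bool" where
  "total_derivs Dx Dy \<longleftrightarrow> derivation Dx \<and> derivation Dy \<and> Dx \<circ> Dy = Dy \<circ> Dx"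

text \<open>Differential connectedness (resp. irreducibility, for a covering equation).\<close>
definition diff_connected :: "('a::{real_algebra_1,comm_ring_1} \<Rightarrow> 'a) \<Rightarrow> ('a \<Rightarrow> 'a) \<Rightarrow> bool" where
  "diff_connected Dx Dy \<longleftrightarrow> (\<forall>h. Dx h = 0 \<and> Dy h = 0 \<longrightarrow> h \<in> range of_real)"

text \<open>Symmetries: derivations vertical over M (annihilating the set B of functions
pulled back from the base M) that commute with both total derivatives.\<close>
definition sym_set :: "'a set \<Rightarrow> ('a::{real_algebra_1,comm_ring_1} \<Rightarrow> 'a) \<Rightarrow> ('a \<Rightarrow> 'a) \<Rightarrow> ('a \<Rightarrow> 'a) set" where
  "sym_set B Dx Dy = {\<phi>. derivation \<phi> \<and> (\<forall>b\<in>B. \<phi> b = 0) \<and> \<phi> \<circ> Dx = Dx \<circ> \<phi> \<and> \<phi> \<circ> Dy = Dy \<circ> \<phi>}"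

definition fin_dim_maps :: "('a \<Rightarrow> 'b::real_vector) set \<Rightarrow> bool" where
  "fin_dim_maps S \<longleftrightarrow> (\<exists>Bs. finite Bs \<and> (\<forall>\<phi>\<in>S. \<exists>c. \<phi> = (\<lambda>f. \<Sum>\<psi>\<in>Bs. c \<psi> *\<^sub>R \<psi> f)))"

text \<open>CL = {(X,Y) | Dx Y = Dy X} / {(Dx P, Dy P)} is finite-dimensional over the reals
iff every conservation law is, modulo trivial ones, a real combination of finitely
many fixed forms.\<close>
definition CL_fin_dim :: "('a::{real_algebra_1,comm_ring_1} \<Rightarrow> 'a) \<Rightarrow> ('a \<Rightarrow> 'a) \<Rightarrow> bool" where
  "CL_fin_dim Dx Dy \<longleftrightarrow>
     (\<exists>(n::nat) Xs Ys. \<forall>X Y. Dx Y = Dy X \<longrightarrow>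
        (\<exists>c P. X = (\<Sum>i<n. c i *\<^sub>R Xs i) + Dx P \<and> Y = (\<Sum>i<n. c i *\<^sub>R Ys i) + Dy P))"

text \<open>A covering of finite rank r with fiber coordinates w 0, ..., w (r-1), in which the
coordinates are Abelian (tilde-D_x w^alpha, tilde-D_y w^alpha lie in F(E)).
F(E~) is the algebra 'b, iota: F(E) -> F(E~) is the pull-back tau^*.
The conditions encode that E~ = E x R^r locally with coordinates w:
 - partial derivatives d/dw^alpha exist, kill F(E), and their common kernel is F(E);
 - every vector field on E lifts to E~ with zero w-components;
 - a vector field on E~ is determined by its values on F(E) and on the w^alpha.\<close>
definition abelian_covering ::
  "('a::{real_algebra_1,comm_ring_1} \<Rightarrow> 'a) \<Rightarrow> ('a \<Rightarrow> 'a) \<Rightarrow> ('a \<Rightarrow> 'b::{real_algebra_1,comm_ring_1})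
    \<Rightarrow> nat \<Rightarrow> (nat \<Rightarrow> 'b) \<Rightarrow> ('b \<Rightarrow> 'b) \<Rightarrow> ('b \<Rightarrow> 'b) \<Rightarrow> bool" where
  "abelian_covering Dx Dy \<iota> r w Dtx Dty \<longleftrightarrow>
     inj \<iota> \<and> linear \<iota> \<and> \<iota> 1 = 1 \<and> (\<forall>a b. \<iota> (a * b) = \<iota> a * \<iota> b)
   \<and> total_derivs Dtx Dty
   \<and> (\<forall>f. Dtx (\<iota> f) = \<iota> (Dx f)) \<and> (\<forall>f. Dty (\<iota> f) = \<iota> (Dy f))
   \<and> (\<forall>\<alpha><r. Dtx (w \<alpha>) \<in> range \<iota> \<and> Dty (w \<alpha>) \<in> range \<iota>)
   \<and> (\<exists>d. (\<forall>\<alpha><r. derivation (d \<alpha>) \<and> (\<forall>f. d \<alpha> (\<iota> f) = 0)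
                 \<and> (\<forall>\<beta><r. d \<alpha> (w \<beta>) = (if \<alpha> = \<beta> then 1 else 0)))
         \<and> (\<forall>h. (\<forall>\<alpha><r. d \<alpha> h = 0) \<longrightarrow> h \<in> range \<iota>))
   \<and> (\<forall>\<phi>. derivation \<phi> \<longrightarrow>
        (\<exists>\<psi>. derivation \<psi> \<and> (\<forall>f. \<psi> (\<iota> f) = \<iota> (\<phi> f)) \<and> (\<forall>\<alpha><r. \<psi> (w \<alpha>) = 0)))
   \<and> (\<forall>\<psi>. derivation \<psi> \<and> (\<forall>f. \<psi> (\<iota> f) = 0) \<and> (\<forall>\<alpha><r. \<psi> (w \<alpha>) = 0) \<longrightarrow> \<psi> = (\<lambda>_. 0))"

end

theory Submission
  imports Defs "HOL-Library.Function_Algebras" "HOL-Analysis.Product_Vector"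
begin

text \<open>
  Pulling back along \<open>\<iota>\<close> maps a conservation law \<open>(X, Y)\<close> of the base to \<open>(\<iota> X, \<iota> Y)\<close>. If the
  pull-back is trivial, \<open>(\<iota> X, \<iota> Y) = (D\<^sub>x P, D\<^sub>y P)\<close> upstairs, then the fibre derivatives
  \<open>\<partial>P/\<partial>w\<^sup>\<alpha>\<close> are constants by irreducibility, so \<open>P = \<iota> Q + \<Sum> c\<^sub>\<alpha> w\<^sup>\<alpha>\<close> and \<open>(X, Y)\<close> is trivial
  modulo the \<open>r\<close> conservation laws \<open>(X\<^sup>\<alpha>, Y\<^sup>\<alpha>)\<close> defining the covering. Hence the conservation laws
  of the base are spanned by these \<open>r\<close> forms and preimages of a finite spanning set upstairs: (1).

  A symmetry \<open>\<phi>\<close> of the base yields \<open>r\<close> conservation laws \<open>\<phi>(X\<^sup>\<alpha>, Y\<^sup>\<alpha>)\<close> upstairs. When these are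
  trivial with potentials \<open>P\<^sub>\<alpha>\<close>, the derivation \<open>\<phi> + \<Sum> P\<^sub>\<alpha> \<partial>/\<partial>w\<^sup>\<alpha>\<close> is a symmetry of the covering
  restricting to \<open>\<phi>\<close>; so these symmetries embed into the symmetries of the covering, and modulo
  them the symmetries of the base embed into \<open>r\<close> copies of its conservation laws: (2).
\<close>

instantiation "fun" :: (type, real_vector) real_vector
begin

definition scaleR_fun :: "real \<Rightarrow> ('a \<Rightarrow> 'b) \<Rightarrow> 'a \<Rightarrow> 'b" where
  "scaleR_fun t f = (\<lambda>x. t *\<^sub>R f x)"

instance
  by standard (auto simp: scaleR_fun_def fun_eq_iff scaleR_add_right scaleR_add_left)

end

lemma scaleR_fun_apply [simp]: "(t *\<^sub>R f) x = t *\<^sub>R f x"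
  by (simp add: scaleR_fun_def)

lemma sum_fun_apply: "(\<Sum>i\<in>S. f i) x = (\<Sum>i\<in>S. f i x)"
  by (induction S rule: infinite_finite_induct) auto

section \<open>Finite generation modulo a kernel\<close>

text \<open>
  A subspace \<open>R\<close> of \<open>V \<times> (I \<Rightarrow> \<real>)\<close> that ignores the coordinates outside a finite set \<open>I\<close> relates
  each \<open>v\<close> to the coordinates of its image in a finite-dimensional quotient. Every subspace \<open>W\<close> on
  which \<open>R\<close> is total is then finitely generated modulo the kernel \<open>{v. (v, 0) \<in> R}\<close>; this is the
  rank--nullity argument without dimensions, by induction on \<open>I\<close>.
\<close>

lemma span_modulo_kernel_pivot:
  fixes R :: "('v::real_vector \<times> ('i \<Rightarrow> real)) set"
  assumes "subspace W" and "subspace R"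
    and w: "w \<in> W" "(w, c0) \<in> R" "c0 x \<noteq> 0"
    and "\<And>v. v \<in> W \<Longrightarrow> \<exists>c. (v, c) \<in> R"
    and rep: "\<And>v c. v \<in> W \<Longrightarrow> (v, c) \<in> R \<Longrightarrow> c x = 0 \<Longrightarrow> \<exists>u\<in>span V. (v - u, 0) \<in> R"
    and v: "v \<in> W"
  shows "\<exists>u\<in>span (insert w V). (v - u, 0) \<in> R"
proof -
  obtain c where c: "(v, c) \<in> R"
    using assms(6) v by blast
  define t where "t = c x / c0 x"
  have "(v - t *\<^sub>R w, c - t *\<^sub>R c0) \<in> R"
    using subspace_diff[OF assms(2) c subspace_scale[OF assms(2) w(2)]] by simp
  moreover have "(c - t *\<^sub>R c0) x = 0"
    using w(3) by (simp add: t_def)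
  moreover have "v - t *\<^sub>R w \<in> W"
    using subspace_diff[OF assms(1) v subspace_scale[OF assms(1) w(1)]] .
  ultimately obtain u where "u \<in> span V" "(v - t *\<^sub>R w - u, 0) \<in> R"
    using rep by blast
  moreover have "t *\<^sub>R w + u \<in> span (insert w V)"
    using span_mono[OF subset_insertI] \<open>u \<in> span V\<close>
    by (intro span_add) (auto simp: span_base span_scale)
  ultimately show ?thesis
    by (metis diff_diff_eq)
qed

lemma finite_span_modulo_kernel_step:
  fixes R :: "('v::real_vector \<times> ('i \<Rightarrow> real)) set"
  assumes "subspace W" and "subspace R" and "\<And>v. v \<in> W \<Longrightarrow> \<exists>c. (v, c) \<in> R"
    and "finite V" "V \<subseteq> W"
    and rep: "\<And>v c. v \<in> W \<Longrightarrow> (v, c) \<in> R \<Longrightarrow> c x = 0 \<Longrightarrow> \<exists>u\<in>span V. (v - u, 0) \<in> R"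
  shows "\<exists>V'. finite V' \<and> V' \<subseteq> W \<and> (\<forall>v\<in>W. \<exists>u\<in>span V'. (v - u, 0) \<in> R)"
proof (cases "\<exists>w c. w \<in> W \<and> (w, c) \<in> R \<and> c x \<noteq> 0")
  case True
  then obtain w c0 where w: "w \<in> W" "(w, c0) \<in> R" "c0 x \<noteq> 0" by blast
  have "\<exists>u\<in>span (insert w V). (v - u, 0) \<in> R" if "v \<in> W" for v
    by (rule span_modulo_kernel_pivot[OF assms(1,2) w _ _ that]) (fact assms(3), fact rep)
  moreover have "finite (insert w V)" "insert w V \<subseteq> W"
    using assms(4,5) w(1) by auto
  ultimately show ?thesis
    by blast
next
  case False
  have "\<exists>u\<in>span V. (v - u, 0) \<in> R" if v: "v \<in> W" for v
  proof -
    obtain c where "(v, c) \<in> R"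
      using assms(3)[OF v] by blast
    moreover from this have "c x = 0"
      using False v by blast
    ultimately show ?thesis
      by (rule rep[OF v])
  qed
  with assms(4,5) show ?thesis
    by blast
qed

lemma forget_coordinate:
  fixes R :: "('v::real_vector \<times> ('i \<Rightarrow> real)) set"
  assumes "subspace W" and "subspace R"
  shows "subspace (fst ` (R \<inter> W \<times> {c. c x = 0}))" and "subspace ((\<lambda>(v, c). (v, c(x := 0))) -` R)"
    and "v \<in> fst ` (R \<inter> W \<times> {c. c x = 0}) \<Longrightarrow> \<exists>c. (v, c) \<in> (\<lambda>(v, c). (v, c(x := 0))) -` R"
proof -
  have "linear (\<lambda>(v, c). (v, c(x := 0)) :: 'v \<times> ('i \<Rightarrow> real))"
    by (rule linearI) (auto simp: fun_eq_iff split: prod.splits)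
  then show "subspace ((\<lambda>(v, c). (v, c(x := 0))) -` R)"
    using assms(2) by (rule linear_subspace_vimage)
  show "subspace (fst ` (R \<inter> W \<times> {c. c x = 0}))"
    by (intro linear_subspace_image linear_fst subspace_inter assms subspace_Times
        linear_subspace_kernel[of "\<lambda>c. c x", unfolded mem_Collect_eq] linearI) auto
  assume "v \<in> fst ` (R \<inter> W \<times> {c. c x = 0})"
  then obtain c where "(v, c) \<in> R" "c x = 0"
    by force
  then have "(v, c) \<in> (\<lambda>(v, c). (v, c(x := 0))) -` R"
    by (simp add: fun_upd_idem)
  then show "\<exists>c. (v, c) \<in> (\<lambda>(v, c). (v, c(x := 0))) -` R" by blast
qed

lemma finite_span_modulo_kernel:
  fixes R :: "('v::real_vector \<times> ('i \<Rightarrow> real)) set"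
  assumes "finite I" and "subspace W" and "subspace R"
    and "\<And>v c c'. \<forall>i\<in>I. c i = c' i \<Longrightarrow> (v, c) \<in> R \<Longrightarrow> (v, c') \<in> R"
    and "\<And>v. v \<in> W \<Longrightarrow> \<exists>c. (v, c) \<in> R"
  shows "\<exists>V. finite V \<and> V \<subseteq> W \<and> (\<forall>v\<in>W. \<exists>u\<in>span V. (v - u, 0) \<in> R)"
  using assms(1-5)
proof (induction I arbitrary: R W rule: finite_induct)
  case empty
  then have "(v, 0) \<in> R" if "v \<in> W" for v
    using that by (metis empty_iff)
  then show ?case
    by (metis diff_zero empty_subsetI finite.emptyI span_zero)
next
  case (insert x I)
  define W' where "W' = fst ` (R \<inter> W \<times> {c. c x = 0})"
  have W'_sub: "W' \<subseteq> W" and W'_iff: "v \<in> W' \<longleftrightarrow> v \<in> W \<and> (\<exists>c. (v, c) \<in> R \<and> c x = 0)" for v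
    unfolding W'_def by force+
  define R' where "R' = (\<lambda>(v, c). (v, c(x := 0))) -` R"
  have "\<exists>V. finite V \<and> V \<subseteq> W' \<and> (\<forall>v\<in>W'. \<exists>u\<in>span V. (v - u, 0) \<in> R')"
  proof (rule insert.IH)
    show "subspace W'" "subspace R'"
      unfolding W'_def R'_def using forget_coordinate[OF insert.prems(1,2)] by blast+
    show "\<exists>c. (v, c) \<in> R'" if "v \<in> W'" for v
      using that unfolding W'_def R'_def by (rule forget_coordinate(3)[OF insert.prems(1,2)])
    show "(v, c') \<in> R'" if "\<forall>i\<in>I. c i = c' i" and "(v, c) \<in> R'" for v c c'
    proof -
      have "\<forall>i\<in>insert x I. (c(x := 0)) i = (c'(x := 0)) i"
        using that(1) by simp
      with that(2) show ?thesis
        unfolding R'_def by (simp only: vimage_eq prod.case insert.prems(3))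
    qed
  qed
  moreover have "(p, 0) \<in> R' \<longleftrightarrow> (p, 0) \<in> R" for p
  proof -
    have "(0 :: 'i \<Rightarrow> real)(x := 0) = 0"
      by (simp add: fun_eq_iff)
    then show ?thesis
      by (simp add: R'_def)
  qed
  ultimately obtain V where V: "finite V" "V \<subseteq> W'"
    and rep: "\<And>v. v \<in> W' \<Longrightarrow> \<exists>u\<in>span V. (v - u, 0) \<in> R"
    by auto
  moreover have "v \<in> W'" if "v \<in> W" "(v, c) \<in> R" "c x = 0" for v c
    using that unfolding W'_def by force
  ultimately show ?case
    by (intro finite_span_modulo_kernel_step[OF insert.prems(1,2,4), of V x]) (use W'_sub in blast)+
qed

lemma finite_span_modulo_preimage:
  assumes "subspace W" and "linear L" and "subspace E" and "finite U"
    and "\<And>v. v \<in> W \<Longrightarrow> \<exists>u\<in>span U. L v - u \<in> E"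
  shows "\<exists>V. finite V \<and> V \<subseteq> W \<and> (\<forall>v\<in>W. \<exists>u\<in>span V. L (v - u) \<in> E)"
proof -
  define R where "R = (\<lambda>p. L (fst p) - (\<Sum>u\<in>U. snd p u *\<^sub>R u)) -` E"
  have "linear (\<lambda>p. L (fst p) - (\<Sum>u\<in>U. snd p u *\<^sub>R u))"
    using assms(2) by (intro linearI)
      (simp_all add: linear_add linear_scale scaleR_add_left sum.distrib scaleR_sum_right scaleR_diff_right)
  then have "subspace R"
    unfolding R_def using assms(3) by (rule linear_subspace_vimage)
  moreover have "(v, c') \<in> R" if agree: "\<forall>u\<in>U. c u = c' u" and "(v, c) \<in> R" for v c c'
  proof -
    have "(\<Sum>u\<in>U. c u *\<^sub>R u) = (\<Sum>u\<in>U. c' u *\<^sub>R u)"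
      using agree by (intro sum.cong) auto
    with \<open>(v, c) \<in> R\<close> show ?thesis
      unfolding R_def by simp
  qed
  moreover have "\<exists>c. (v, c) \<in> R" if v: "v \<in> W" for v
  proof -
    obtain u where "u \<in> span U" "L v - u \<in> E"
      using assms(5)[OF v] by blast
    moreover from this(1) obtain c where "u = (\<Sum>x\<in>U. c x *\<^sub>R x)"
      using assms(4) by (auto simp: real_vector.span_finite)
    ultimately have "(v, c) \<in> R"
      unfolding R_def by simp
    then show ?thesis by blast
  qed
  ultimately have "\<exists>V. finite V \<and> V \<subseteq> W \<and> (\<forall>v\<in>W. \<exists>u\<in>span V. (v - u, 0) \<in> R)"
    by (rule finite_span_modulo_kernel[OF assms(4,1)])
  moreover have "(p, 0) \<in> R \<longleftrightarrow> L p \<in> E" for p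
    unfolding R_def by simp
  ultimately show ?thesis
    by (simp only:)
qed

lemma finite_span_of_injective_image:
  assumes "subspace W" and "linear T" and "inj_on T W" and "finite B" and "T ` W \<subseteq> span B"
  shows "\<exists>V. finite V \<and> V \<subseteq> W \<and> W \<subseteq> span V"
proof -
  have "\<exists>u\<in>span B. T v - u \<in> {0}" if "v \<in> W" for v
    using assms(5) that by auto
  then have "\<exists>V. finite V \<and> V \<subseteq> W \<and> (\<forall>v\<in>W. \<exists>u\<in>span V. T (v - u) \<in> {0})"
    by (rule finite_span_modulo_preimage[OF assms(1,2) subspace_single_0 assms(4)])
  then obtain V where V: "finite V" "V \<subseteq> W" and rep: "\<forall>v\<in>W. \<exists>u\<in>span V. T (v - u) = 0"
    by auto
  have "v \<in> span V" if v: "v \<in> W" for v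
  proof -
    obtain u where u: "u \<in> span V" "T (v - u) = 0"
      using rep v by blast
    moreover have "v - u \<in> W"
      using subspace_diff[OF assms(1) v] span_minimal[OF V(2) assms(1)] u(1) by blast
    ultimately have "v - u = 0"
      using inj_onD[OF assms(3)] linear_0[OF assms(2)] subspace_0[OF assms(1)] by metis
    with u(1) show ?thesis
      by simp
  qed
  with V show ?thesis
    by blast
qed

lemma linear_intertwined:
  assumes "inj \<iota>" and "linear \<iota>" and "linear D'" and intertwine: "\<And>f. D' (\<iota> f) = \<iota> (D f)"
  shows "linear D"
proof (rule linearI)
  fix a b :: 'a and t :: real
  have "\<iota> (D (a + b)) = D' (\<iota> a) + D' (\<iota> b)"
    by (simp add: intertwine[symmetric] linear_add[OF assms(2)] linear_add[OF assms(3)])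
  also have "\<dots> = \<iota> (D a + D b)"
    by (simp add: intertwine linear_add[OF assms(2)])
  finally show "D (a + b) = D a + D b"
    using assms(1) by (simp add: inj_eq)
  have "\<iota> (D (t *\<^sub>R a)) = t *\<^sub>R D' (\<iota> a)"
    by (simp add: intertwine[symmetric] linear_scale[OF assms(2)] linear_scale[OF assms(3)])
  also have "\<dots> = \<iota> (t *\<^sub>R D a)"
    by (simp add: intertwine linear_scale[OF assms(2)])
  finally show "D (t *\<^sub>R a) = t *\<^sub>R D a"
    using assms(1) by (simp add: inj_eq)
qed

lemma derivation_mult: "derivation D \<Longrightarrow> D (a * b) = a * D b + D a * b"
  by (simp add: derivation_def)

lemma derivation_one: "derivation D \<Longrightarrow> D 1 = 0"
  using derivation_mult[of D 1 1] by simp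

lemma derivation_of_real:
  assumes "derivation D" shows "D (of_real c) = 0"
proof -
  have "D (c *\<^sub>R 1) = c *\<^sub>R D 1"
    using assms by (simp add: derivation_def linear_scale)
  then show ?thesis
    using derivation_one[OF assms] by (simp add: scaleR_conv_of_real)
qed

lemma subspace_derivations: "subspace {D. derivation D}"
  unfolding subspace_def derivation_def
  by (auto simp: zero_fun_def plus_fun_def scaleR_fun_def[abs_def] linear_zero linear_compose_add
      linear_compose_scale_right algebra_simps)

lemma derivation_commutator:
  assumes "derivation D" "derivation E"
  shows "derivation (\<lambda>h. D (E h) - E (D h))"
  using assms unfolding derivation_def
  by (auto simp: linear_compose_sub[unfolded o_def] linear_compose[unfolded o_def] algebra_simps linear_add)

lemma derivation_mult_left:
  assumes "derivation D" shows "derivation (\<lambda>h. a * D h)"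
  using assms unfolding derivation_def
  by (auto intro!: linearI simp: linear_add linear_scale algebra_simps)

section \<open>Conservation laws and symmetries\<close>

text \<open>A horizontal 1-form \<open>X dx + Y dy\<close> is represented by the pair \<open>(X, Y)\<close>.\<close>

definition closed_forms :: "('a::real_vector \<Rightarrow> 'a) \<Rightarrow> ('a \<Rightarrow> 'a) \<Rightarrow> ('a \<times> 'a) set" where
  "closed_forms Dx Dy = {(X, Y). Dx Y = Dy X}"

definition exact_forms :: "('a::real_vector \<Rightarrow> 'a) \<Rightarrow> ('a \<Rightarrow> 'a) \<Rightarrow> ('a \<times> 'a) set" where
  "exact_forms Dx Dy = range (\<lambda>P. (Dx P, Dy P))"

lemma subspace_closed_forms:
  assumes "linear Dx" "linear Dy"
  shows "subspace (closed_forms Dx Dy)"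
  using assms unfolding subspace_def closed_forms_def
  by (auto simp: zero_prod_def linear_0 linear_add linear_scale)

lemma subspace_exact_forms:
  assumes "linear Dx" "linear Dy"
  shows "subspace (exact_forms Dx Dy)"
proof -
  have "linear (\<lambda>P. (Dx P, Dy P))"
    using assms by (intro linearI) (auto simp: linear_add linear_scale)
  then show ?thesis
    unfolding exact_forms_def by (rule linear_subspace_image) simp
qed

lemma CL_fin_dim_imp_span:
  assumes "CL_fin_dim Dx Dy"
  shows "\<exists>U. finite U \<and> (\<forall>u\<in>closed_forms Dx Dy. \<exists>v\<in>span U. u - v \<in> exact_forms Dx Dy)"
proof -
  obtain n :: nat and Xs Ys where rep: "\<And>X Y. Dx Y = Dy X \<Longrightarrow>
      \<exists>c P. X = (\<Sum>i<n. c i *\<^sub>R Xs i) + Dx P \<and> Y = (\<Sum>i<n. c i *\<^sub>R Ys i) + Dy P"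
    using assms unfolding CL_fin_dim_def by blast
  have "\<exists>v\<in>span ((\<lambda>i. (Xs i, Ys i)) ` {..<n}). u - v \<in> exact_forms Dx Dy"
    if u: "u \<in> closed_forms Dx Dy" for u
  proof -
    obtain X Y where u: "u = (X, Y)" "Dx Y = Dy X"
      using u unfolding closed_forms_def by blast
    obtain c P where "X = (\<Sum>i<n. c i *\<^sub>R Xs i) + Dx P" "Y = (\<Sum>i<n. c i *\<^sub>R Ys i) + Dy P"
      using rep[OF u(2)] by blast
    then have "u - (\<Sum>i<n. c i *\<^sub>R (Xs i, Ys i)) = (Dx P, Dy P)"
      using u(1) by (simp add: prod_eq_iff fst_sum snd_sum)
    moreover have "(\<Sum>i<n. c i *\<^sub>R (Xs i, Ys i)) \<in> span ((\<lambda>i. (Xs i, Ys i)) ` {..<n})"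
      by (intro span_sum span_scale span_base) auto
    ultimately show ?thesis
      unfolding exact_forms_def by (metis rangeI)
  qed
  then show ?thesis
    by blast
qed

lemma CL_fin_dimI:
  assumes "finite U" and "\<And>u. u \<in> closed_forms Dx Dy \<Longrightarrow> \<exists>v\<in>span U. u - v \<in> exact_forms Dx Dy"
  shows "CL_fin_dim Dx Dy"
proof -
  obtain e where e: "bij_betw e {..<card U} U"
    using ex_bij_betw_nat_finite[OF assms(1)] by (auto simp: atLeast0LessThan)
  have "\<exists>c P. X = (\<Sum>i<card U. c i *\<^sub>R fst (e i)) + Dx P \<and> Y = (\<Sum>i<card U. c i *\<^sub>R snd (e i)) + Dy P"
    if closed: "Dx Y = Dy X" for X Y
  proof -
    obtain v P where "v \<in> span U" and XY: "(X, Y) - v = (Dx P, Dy P)"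
      using assms(2)[of "(X, Y)"] closed unfolding closed_forms_def exact_forms_def by auto
    then obtain c where "v = (\<Sum>u\<in>U. c u *\<^sub>R u)"
      using assms(1) by (auto simp: real_vector.span_finite)
    also have "\<dots> = (\<Sum>i<card U. c (e i) *\<^sub>R e i)"
      by (rule sum.reindex_bij_betw[OF e, symmetric])
    finally have "fst v = (\<Sum>i<card U. c (e i) *\<^sub>R fst (e i))" "snd v = (\<Sum>i<card U. c (e i) *\<^sub>R snd (e i))"
      by (simp_all add: fst_sum snd_sum)
    moreover have "X = fst v + Dx P" "Y = snd v + Dy P"
      using XY by (auto simp: prod_eq_iff diff_eq_eq)
    ultimately show ?thesis
      by auto
  qed
  then show ?thesis
    unfolding CL_fin_dim_def by (intro exI[of _ "card U"] exI[of _ "fst \<circ> e"] exI[of _ "snd \<circ> e"]) simp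
qed

lemma finite_span_modulo_exact:
  fixes L :: "nat \<Rightarrow> 'v::real_vector \<Rightarrow> 'a::{real_algebra_1,comm_ring_1} \<times> 'a"
  assumes "CL_fin_dim Dx Dy" and "linear Dx" "linear Dy" and "subspace W"
    and "\<And>\<alpha>. linear (L \<alpha>)"
    and closed: "\<And>\<alpha> v. \<alpha> < n \<Longrightarrow> v \<in> W \<Longrightarrow> L \<alpha> v \<in> closed_forms Dx Dy"
  shows "\<exists>V. finite V \<and> V \<subseteq> W \<and> (\<forall>v\<in>W. \<exists>u\<in>span V. \<forall>\<alpha><n. L \<alpha> (v - u) \<in> exact_forms Dx Dy)"
proof -
  obtain U where "finite U"
    and rep: "\<And>u. u \<in> closed_forms Dx Dy \<Longrightarrow> \<exists>x\<in>span U. u - x \<in> exact_forms Dx Dy"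
    using CL_fin_dim_imp_span[OF assms(1)] by blast
  define \<delta> :: "nat \<Rightarrow> 'a \<times> 'a \<Rightarrow> nat \<Rightarrow> 'a \<times> 'a" where "\<delta> \<alpha> x = (\<lambda>\<beta>. if \<beta> = \<alpha> then x else 0)" for \<alpha> x
  define U' where "U' = case_prod \<delta> ` ({..<n} \<times> U)"
  define E where "E = (\<Inter>\<alpha>\<in>{..<n}. (\<lambda>f. f \<alpha>) -` exact_forms Dx Dy)"
  have "linear (\<lambda>v \<alpha>. L \<alpha> v)"
    using assms(5) by (intro linearI) (simp_all add: fun_eq_iff linear_add linear_scale)
  moreover have "subspace E"
    unfolding E_def using assms(2,3)
    by (intro subspace_Int linear_subspace_vimage subspace_exact_forms) (auto intro: linearI)
  moreover have "finite U'"
    unfolding U'_def using \<open>finite U\<close> by simp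
  moreover have "\<exists>u\<in>span U'. (\<lambda>\<alpha>. L \<alpha> v) - u \<in> E" if v: "v \<in> W" for v
  proof -
    obtain x where x: "\<And>\<alpha>. \<alpha> < n \<Longrightarrow> x \<alpha> \<in> span U \<and> L \<alpha> v - x \<alpha> \<in> exact_forms Dx Dy"
      using rep[OF closed[OF _ v]] by metis
    have "\<delta> \<alpha> (x \<alpha>) \<in> span U'" if "\<alpha> < n" for \<alpha>
    proof -
      have "linear (\<delta> \<alpha>)"
        unfolding \<delta>_def by (intro linearI) (auto simp: fun_eq_iff)
      then have "\<delta> \<alpha> (x \<alpha>) \<in> span (\<delta> \<alpha> ` U)"
        using x[OF that] by (simp add: linear_span_image)
      moreover have "\<delta> \<alpha> ` U \<subseteq> U'"
        unfolding U'_def using that by auto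
      ultimately show ?thesis
        using span_mono by blast
    qed
    then have "(\<Sum>\<alpha><n. \<delta> \<alpha> (x \<alpha>)) \<in> span U'"
      by (intro span_sum) simp
    moreover have "((\<lambda>\<alpha>. L \<alpha> v) - (\<Sum>\<alpha><n. \<delta> \<alpha> (x \<alpha>))) \<beta> = L \<beta> v - x \<beta>" if "\<beta> < n" for \<beta>
      using that by (simp add: \<delta>_def sum_fun_apply)
    ultimately show ?thesis
      unfolding E_def using x by (intro bexI[of _ "\<Sum>\<alpha><n. \<delta> \<alpha> (x \<alpha>)"]) auto
  qed
  ultimately have "\<exists>V. finite V \<and> V \<subseteq> W \<and> (\<forall>v\<in>W. \<exists>u\<in>span V. (\<lambda>\<alpha>. L \<alpha> (v - u)) \<in> E)"
    by (rule finite_span_modulo_preimage[OF assms(4)])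
  then show ?thesis
    unfolding E_def by (simp only: INT_iff vimage_eq Ball_def lessThan_iff)
qed

lemma fin_dim_maps_iff_span:
  fixes S :: "('a \<Rightarrow> 'b::real_vector) set"
  shows "fin_dim_maps S \<longleftrightarrow> (\<exists>Bs. finite Bs \<and> S \<subseteq> span Bs)"
proof -
  have "(\<lambda>f. \<Sum>\<psi>\<in>Bs. c \<psi> *\<^sub>R \<psi> f) = (\<Sum>\<psi>\<in>Bs. c \<psi> *\<^sub>R \<psi>)" for Bs :: "('a \<Rightarrow> 'b) set" and c
    by (simp add: fun_eq_iff sum_fun_apply)
  then have "fin_dim_maps S \<longleftrightarrow> (\<exists>Bs. finite Bs \<and> (\<forall>\<phi>\<in>S. \<exists>c. \<phi> = (\<Sum>\<psi>\<in>Bs. c \<psi> *\<^sub>R \<psi>)))"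
    unfolding fin_dim_maps_def by (simp only:)
  also have "\<dots> \<longleftrightarrow> (\<exists>Bs. finite Bs \<and> S \<subseteq> span Bs)"
    by (intro ex_cong1 conj_cong refl) (auto simp: real_vector.span_finite)
  finally show ?thesis .
qed

lemma subspace_sym_set:
  assumes "linear Dx" "linear Dy"
  shows "subspace (sym_set B Dx Dy)"
proof -
  have eq: "sym_set B Dx Dy = {\<phi>. derivation \<phi>} \<inter> (\<Inter>b\<in>B. {\<phi>. \<phi> b = 0})
      \<inter> {\<phi>. \<forall>h. \<phi> (Dx h) - Dx (\<phi> h) = 0} \<inter> {\<phi>. \<forall>h. \<phi> (Dy h) - Dy (\<phi> h) = 0}"
    unfolding sym_set_def by (auto simp: fun_eq_iff)
  have "subspace {\<phi>. \<forall>h. \<phi> (D h) - D (\<phi> h) = 0}" if "linear D" for D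
    using that unfolding subspace_def by (auto simp: linear_add linear_scale linear_0 algebra_simps)
  moreover have "subspace {\<phi> :: 'a \<Rightarrow> 'a. \<phi> b = 0}" for b
    unfolding subspace_def by auto
  ultimately show ?thesis
    unfolding eq using assms subspace_derivations by (intro subspace_inter subspace_Int) auto
qed

lemma sym_set_closed_forms:
  assumes "\<phi> \<in> sym_set B Dx Dy" "u \<in> closed_forms Dx Dy"
  shows "map_prod \<phi> \<phi> u \<in> closed_forms Dx Dy"
  using assms unfolding sym_set_def closed_forms_def by (clarsimp simp: fun_eq_iff) metis

section \<open>Abelian coverings\<close>

locale abelian_cover =
  fixes Dx Dy :: "'a::{real_algebra_1,comm_ring_1} \<Rightarrow> 'a"
    and \<iota> :: "'a \<Rightarrow> 'b::{real_algebra_1,comm_ring_1}"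
    and r :: nat and w :: "nat \<Rightarrow> 'b"
    and Dtx Dty :: "'b \<Rightarrow> 'b"
  assumes covering: "abelian_covering Dx Dy \<iota> r w Dtx Dty"
    and irreducible: "diff_connected Dtx Dty"
begin

lemma
  shows inj_pullback: "inj \<iota>" and linear_pullback: "linear \<iota>"
    and derivation_Dtx: "derivation Dtx" and derivation_Dty: "derivation Dty"
    and Dtx_Dty_commute: "Dtx (Dty h) = Dty (Dtx h)"
    and Dtx_pullback: "Dtx (\<iota> f) = \<iota> (Dx f)" and Dty_pullback: "Dty (\<iota> f) = \<iota> (Dy f)"
  using covering unfolding abelian_covering_def total_derivs_def by (auto simp: fun_eq_iff)

lemma linear_Dtx: "linear Dtx" and linear_Dty: "linear Dty"
  using derivation_Dtx derivation_Dty by (simp_all add: derivation_def)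

lemma Dtx_w_in_range: "\<alpha> < r \<Longrightarrow> Dtx (w \<alpha>) \<in> range \<iota>" and Dty_w_in_range: "\<alpha> < r \<Longrightarrow> Dty (w \<alpha>) \<in> range \<iota>"
  using covering unfolding abelian_covering_def by auto

lemma linear_Dx: "linear Dx" and linear_Dy: "linear Dy"
  using linear_intertwined[OF inj_pullback linear_pullback] derivation_Dtx derivation_Dty
    Dtx_pullback Dty_pullback by (auto simp: derivation_def)

lemma lift_derivation:
  "derivation \<phi> \<Longrightarrow> \<exists>\<psi>. derivation \<psi> \<and> (\<forall>f. \<psi> (\<iota> f) = \<iota> (\<phi> f)) \<and> (\<forall>\<alpha><r. \<psi> (w \<alpha>) = 0)"
  using covering unfolding abelian_covering_def by blast

lemma derivation_eq_zero:
  assumes "derivation \<chi>" "\<And>f. \<chi> (\<iota> f) = 0" "\<And>\<alpha>. \<alpha> < r \<Longrightarrow> \<chi> (w \<alpha>) = 0"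
  shows "\<chi> h = 0"
  using assms covering unfolding abelian_covering_def by (metis (no_types, lifting))

lemma derivations_commute_on_generators:
  assumes "derivation \<phi>" "derivation D"
    and "\<And>f. \<phi> (D (\<iota> f)) = D (\<phi> (\<iota> f))" "\<And>\<alpha>. \<alpha> < r \<Longrightarrow> \<phi> (D (w \<alpha>)) = D (\<phi> (w \<alpha>))"
  shows "\<phi> (D h) = D (\<phi> h)"
  using derivation_eq_zero[OF derivation_commutator[OF assms(1,2)]] assms(3,4) by simp

definition fibre_derivs :: "(nat \<Rightarrow> 'b \<Rightarrow> 'b) \<Rightarrow> bool" where
  "fibre_derivs d \<longleftrightarrow>
     (\<forall>\<alpha><r. derivation (d \<alpha>) \<and> (\<forall>f. d \<alpha> (\<iota> f) = 0) \<and> (\<forall>\<beta><r. d \<alpha> (w \<beta>) = (if \<alpha> = \<beta> then 1 else 0)))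
   \<and> (\<forall>h. (\<forall>\<alpha><r. d \<alpha> h = 0) \<longrightarrow> h \<in> range \<iota>)"

definition fibre_deriv :: "nat \<Rightarrow> 'b \<Rightarrow> 'b" where
  "fibre_deriv = (SOME d. fibre_derivs d)"

lemma fibre_derivs: "fibre_derivs fibre_deriv"
proof -
  have "\<exists>d. fibre_derivs d"
    using covering unfolding abelian_covering_def fibre_derivs_def by blast
  then show ?thesis
    unfolding fibre_deriv_def by (rule someI_ex)
qed

lemma
  assumes "\<alpha> < r"
  shows derivation_fibre_deriv: "derivation (fibre_deriv \<alpha>)"
    and fibre_deriv_pullback: "fibre_deriv \<alpha> (\<iota> f) = 0"
    and fibre_deriv_w: "\<beta> < r \<Longrightarrow> fibre_deriv \<alpha> (w \<beta>) = (if \<alpha> = \<beta> then 1 else 0)"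
  using fibre_derivs assms unfolding fibre_derivs_def by auto

lemma fibre_derivs_eq_zero_imp_pullback: "(\<And>\<alpha>. \<alpha> < r \<Longrightarrow> fibre_deriv \<alpha> h = 0) \<Longrightarrow> h \<in> range \<iota>"
  using fibre_derivs unfolding fibre_derivs_def by blast

lemma fibre_deriv_commute:
  assumes "\<alpha> < r" and D: "D = Dtx \<or> D = Dty"
  shows "fibre_deriv \<alpha> (D h) = D (fibre_deriv \<alpha> h)"
proof -
  have dD: "derivation D"
    using D derivation_Dtx derivation_Dty by auto
  have D0: "D (fibre_deriv \<alpha> (\<iota> g)) = 0" for g
    using fibre_deriv_pullback[OF assms(1)] derivation_of_real[OF dD, of 0] by simp
  show ?thesis
  proof (rule derivations_commute_on_generators[OF derivation_fibre_deriv[OF assms(1)] dD])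
    fix f
    obtain g where "D (\<iota> f) = \<iota> g"
      using D Dtx_pullback Dty_pullback by blast
    then show "fibre_deriv \<alpha> (D (\<iota> f)) = D (fibre_deriv \<alpha> (\<iota> f))"
      using fibre_deriv_pullback[OF assms(1)] D0 by simp
  next
    fix \<beta> assume "\<beta> < r"
    then obtain g where "D (w \<beta>) = \<iota> g"
      using D Dtx_w_in_range Dty_w_in_range by blast
    then show "fibre_deriv \<alpha> (D (w \<beta>)) = D (fibre_deriv \<alpha> (w \<beta>))"
      using fibre_deriv_pullback[OF assms(1)] fibre_deriv_w[OF assms(1) \<open>\<beta> < r\<close>]
        derivation_one[OF dD] D0[of 0] by simp
  qed
qed

lemma potential_decomposition:
  assumes "Dtx P \<in> range \<iota>" "Dty P \<in> range \<iota>"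
  shows "\<exists>Q c. P = \<iota> Q + (\<Sum>\<alpha><r. c \<alpha> *\<^sub>R w \<alpha>)"
proof -
  have "\<exists>c. fibre_deriv \<alpha> P = of_real c" if "\<alpha> < r" for \<alpha>
  proof -
    have "Dtx (fibre_deriv \<alpha> P) = 0" "Dty (fibre_deriv \<alpha> P) = 0"
      using assms fibre_deriv_commute[OF that] fibre_deriv_pullback[OF that] by (metis rangeE)+
    then show ?thesis
      using irreducible unfolding diff_connected_def by blast
  qed
  then obtain c where c: "\<And>\<alpha>. \<alpha> < r \<Longrightarrow> fibre_deriv \<alpha> P = of_real (c \<alpha>)"
    by metis
  have "fibre_deriv \<beta> (P - (\<Sum>\<alpha><r. c \<alpha> *\<^sub>R w \<alpha>)) = 0" if "\<beta> < r" for \<beta>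
  proof -
    have lin: "linear (fibre_deriv \<beta>)"
      using derivation_fibre_deriv[OF that] by (simp add: derivation_def)
    have "fibre_deriv \<beta> (P - (\<Sum>\<alpha><r. c \<alpha> *\<^sub>R w \<alpha>)) = fibre_deriv \<beta> P - (\<Sum>\<alpha><r. c \<alpha> *\<^sub>R fibre_deriv \<beta> (w \<alpha>))"
      by (simp add: linear_diff[OF lin] linear_sum[OF lin] linear_scale[OF lin])
    also have "(\<Sum>\<alpha><r. c \<alpha> *\<^sub>R fibre_deriv \<beta> (w \<alpha>)) = (\<Sum>\<alpha><r. if \<alpha> = \<beta> then c \<alpha> *\<^sub>R 1 else 0)"
      using fibre_deriv_w[OF that] by (intro sum.cong) auto
    finally show ?thesis
      using that c[OF that] by (simp add: scaleR_conv_of_real)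
  qed
  then obtain Q where "P - (\<Sum>\<alpha><r. c \<alpha> *\<^sub>R w \<alpha>) = \<iota> Q"
    using fibre_derivs_eq_zero_imp_pullback by blast
  then show ?thesis
    by (metis diff_eq_eq)
qed

text \<open>
  The conservation law \<open>X\<^sup>\<alpha> dx + Y\<^sup>\<alpha> dy\<close> of the base with \<open>D\<^sub>x w\<^sup>\<alpha> = \<iota> X\<^sup>\<alpha>\<close> and \<open>D\<^sub>y w\<^sup>\<alpha> = \<iota> Y\<^sup>\<alpha>\<close>
  upstairs, which defines the fibre coordinate \<open>w\<^sup>\<alpha>\<close> of the Abelian covering.
\<close>

definition defining_form :: "nat \<Rightarrow> 'a \<times> 'a" where
  "defining_form \<alpha> = (inv \<iota> (Dtx (w \<alpha>)), inv \<iota> (Dty (w \<alpha>)))"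

lemma pullback_defining_form: "\<alpha> < r \<Longrightarrow> map_prod \<iota> \<iota> (defining_form \<alpha>) = (Dtx (w \<alpha>), Dty (w \<alpha>))"
  using Dtx_w_in_range Dty_w_in_range by (simp add: defining_form_def f_inv_into_f)

lemma pullback_closed_forms:
  "u \<in> closed_forms Dx Dy \<longleftrightarrow> map_prod \<iota> \<iota> u \<in> closed_forms Dtx Dty"
  unfolding closed_forms_def using inj_pullback by (auto simp: Dtx_pullback Dty_pullback inj_eq)

lemma defining_form_closed: "\<alpha> < r \<Longrightarrow> defining_form \<alpha> \<in> closed_forms Dx Dy"
  using pullback_closed_forms pullback_defining_form Dtx_Dty_commute
  unfolding closed_forms_def by auto

lemma linear_map_prod_pullback: "linear (map_prod \<iota> \<iota>)"
  using linear_pullback by (intro linearI) (auto simp: linear_add linear_scale)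

lemma exact_pullback_decomposition:
  assumes "map_prod \<iota> \<iota> u \<in> exact_forms Dtx Dty"
  shows "\<exists>v\<in>span (defining_form ` {..<r}). u - v \<in> exact_forms Dx Dy"
proof -
  obtain P where P: "map_prod \<iota> \<iota> u = (Dtx P, Dty P)"
    using assms unfolding exact_forms_def by blast
  then have "Dtx P \<in> range \<iota>" "Dty P \<in> range \<iota>"
    by (metis fst_conv fst_map_prod rangeI, metis snd_conv snd_map_prod rangeI)
  then obtain Q c where Q: "P = \<iota> Q + (\<Sum>\<alpha><r. c \<alpha> *\<^sub>R w \<alpha>)"
    using potential_decomposition by blast
  define v where "v = (\<Sum>\<alpha><r. c \<alpha> *\<^sub>R defining_form \<alpha>)"
  have Dtx_P: "Dtx P = \<iota> (Dx Q) + (\<Sum>\<alpha><r. c \<alpha> *\<^sub>R Dtx (w \<alpha>))"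
    unfolding Q by (simp add: linear_add[OF linear_Dtx] linear_sum[OF linear_Dtx] linear_scale[OF linear_Dtx] Dtx_pullback)
  have Dty_P: "Dty P = \<iota> (Dy Q) + (\<Sum>\<alpha><r. c \<alpha> *\<^sub>R Dty (w \<alpha>))"
    unfolding Q by (simp add: linear_add[OF linear_Dty] linear_sum[OF linear_Dty] linear_scale[OF linear_Dty] Dty_pullback)
  have "map_prod \<iota> \<iota> (u - v) = (Dtx P, Dty P) - (\<Sum>\<alpha><r. c \<alpha> *\<^sub>R map_prod \<iota> \<iota> (defining_form \<alpha>))"
    unfolding v_def P[symmetric]
    by (simp add: linear_diff[OF linear_map_prod_pullback] linear_sum[OF linear_map_prod_pullback]
        linear_scale[OF linear_map_prod_pullback])
  also have "(\<Sum>\<alpha><r. c \<alpha> *\<^sub>R map_prod \<iota> \<iota> (defining_form \<alpha>)) = (\<Sum>\<alpha><r. c \<alpha> *\<^sub>R (Dtx (w \<alpha>), Dty (w \<alpha>)))"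
    using pullback_defining_form by (intro sum.cong) auto
  also have "(Dtx P, Dty P) - \<dots> = map_prod \<iota> \<iota> (Dx Q, Dy Q)"
    unfolding Dtx_P Dty_P by (simp add: prod_eq_iff fst_sum snd_sum)
  finally have "u - v = (Dx Q, Dy Q)"
    using inj_pullback by (simp add: prod_eq_iff inj_eq)
  moreover have "v \<in> span (defining_form ` {..<r})"
    unfolding v_def by (intro span_sum span_scale span_base) auto
  ultimately show ?thesis
    unfolding exact_forms_def by blast
qed

definition obstruction :: "nat \<Rightarrow> ('a \<Rightarrow> 'a) \<Rightarrow> 'b \<times> 'b" where
  "obstruction \<alpha> \<phi> = map_prod \<iota> \<iota> (map_prod \<phi> \<phi> (defining_form \<alpha>))"

lemma linear_obstruction: "linear (obstruction \<alpha>)"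
  unfolding obstruction_def using linear_pullback
  by (intro linearI) (simp_all add: linear_add linear_scale map_prod_def split_beta)

lemma obstruction_closed:
  "\<alpha> < r \<Longrightarrow> \<phi> \<in> sym_set B Dx Dy \<Longrightarrow> obstruction \<alpha> \<phi> \<in> closed_forms Dtx Dty"
  unfolding obstruction_def using pullback_closed_forms sym_set_closed_forms defining_form_closed by blast

lemma lift_derivation_prescribed:
  assumes "derivation \<kappa>"
  shows "\<exists>\<psi>. derivation \<psi> \<and> (\<forall>f. \<psi> (\<iota> f) = \<iota> (\<kappa> f)) \<and> (\<forall>\<beta><r. \<psi> (w \<beta>) = P \<beta>)"
proof -
  obtain \<psi>0 where \<psi>0: "derivation \<psi>0" "\<And>f. \<psi>0 (\<iota> f) = \<iota> (\<kappa> f)" "\<And>\<alpha>. \<alpha> < r \<Longrightarrow> \<psi>0 (w \<alpha>) = 0"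
    using lift_derivation[OF assms] by blast
  define \<psi> where "\<psi> = \<psi>0 + (\<Sum>\<alpha><r. (\<lambda>h. P \<alpha> * fibre_deriv \<alpha> h))"
  have \<psi>_apply: "\<psi> h = \<psi>0 h + (\<Sum>\<alpha><r. P \<alpha> * fibre_deriv \<alpha> h)" for h
    by (simp add: \<psi>_def sum_fun_apply)
  have "(\<Sum>\<alpha><r. (\<lambda>h. P \<alpha> * fibre_deriv \<alpha> h)) \<in> {D. derivation D}"
    using derivation_mult_left[OF derivation_fibre_deriv] by (intro subspace_sum[OF subspace_derivations]) simp
  then have "derivation \<psi>"
    using subspace_add[OF subspace_derivations] \<psi>0(1) unfolding \<psi>_def by blast
  moreover have "\<psi> (\<iota> f) = \<iota> (\<kappa> f)" for f
    by (simp add: \<psi>_apply \<psi>0(2) fibre_deriv_pullback)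
  moreover have "\<psi> (w \<beta>) = P \<beta>" if "\<beta> < r" for \<beta>
  proof -
    have "(\<Sum>\<alpha><r. P \<alpha> * fibre_deriv \<alpha> (w \<beta>)) = (\<Sum>\<alpha><r. if \<alpha> = \<beta> then P \<alpha> else 0)"
      using fibre_deriv_w that by (intro sum.cong) auto
    then show ?thesis
      using that by (simp add: \<psi>_apply \<psi>0(3))
  qed
  ultimately show ?thesis
    by blast
qed

text \<open>
  Prescribing \<open>\<psi>(w\<^sup>\<beta>)\<close> to be a potential of the \<open>\<beta>\<close>-th obstruction is what makes the lift commute
  with the total derivatives on the generators \<open>w\<^sup>\<beta>\<close>.
\<close>

lemma lift_symmetry:
  assumes \<kappa>: "\<kappa> \<in> sym_set B Dx Dy"
    and exact: "\<And>\<alpha>. \<alpha> < r \<Longrightarrow> obstruction \<alpha> \<kappa> \<in> exact_forms Dtx Dty"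
  shows "\<exists>\<psi>\<in>sym_set (\<iota> ` B) Dtx Dty. \<forall>f. \<psi> (\<iota> f) = \<iota> (\<kappa> f)"
proof -
  have "derivation \<kappa>" and \<kappa>_B: "\<And>b. b \<in> B \<Longrightarrow> \<kappa> b = 0"
    and \<kappa>_Dx: "\<And>h. \<kappa> (Dx h) = Dx (\<kappa> h)" and \<kappa>_Dy: "\<And>h. \<kappa> (Dy h) = Dy (\<kappa> h)"
    using \<kappa> unfolding sym_set_def by (auto simp: fun_eq_iff)
  have "\<forall>\<alpha>\<in>{..<r}. \<exists>p. map_prod \<iota> \<iota> (map_prod \<kappa> \<kappa> (defining_form \<alpha>)) = (Dtx p, Dty p)"
    using exact unfolding exact_forms_def obstruction_def by blast
  then obtain P where P: "\<And>\<alpha>. \<alpha> < r \<Longrightarrow> map_prod \<iota> \<iota> (map_prod \<kappa> \<kappa> (defining_form \<alpha>)) = (Dtx (P \<alpha>), Dty (P \<alpha>))"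
    by (auto dest!: bchoice)
  obtain \<psi> where "derivation \<psi>" and \<psi>_pullback: "\<And>f. \<psi> (\<iota> f) = \<iota> (\<kappa> f)" and \<psi>_w: "\<And>\<beta>. \<beta> < r \<Longrightarrow> \<psi> (w \<beta>) = P \<beta>"
    using lift_derivation_prescribed[OF \<open>derivation \<kappa>\<close>] by blast
  have commute: "\<psi> (D h) = D (\<psi> h)"
    if "derivation D" "\<And>f. D (\<iota> f) = \<iota> (D0 f)" "\<And>f. \<kappa> (D0 f) = D0 (\<kappa> f)"
      and "\<And>\<beta>. \<beta> < r \<Longrightarrow> D (w \<beta>) = \<iota> (pr (defining_form \<beta>))"
      and "\<And>\<beta>. \<beta> < r \<Longrightarrow> \<iota> (\<kappa> (pr (defining_form \<beta>))) = D (P \<beta>)"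
    for D D0 pr h
    by (rule derivations_commute_on_generators[OF \<open>derivation \<psi>\<close> that(1)])
      (use that in \<open>simp_all add: \<psi>_pullback \<psi>_w\<close>)
  have "\<psi> (Dtx h) = Dtx (\<psi> h)" for h
  proof (rule commute[OF derivation_Dtx Dtx_pullback \<kappa>_Dx])
    fix \<beta> assume "\<beta> < r"
    with pullback_defining_form P show "Dtx (w \<beta>) = \<iota> (fst (defining_form \<beta>))"
      and "\<iota> (\<kappa> (fst (defining_form \<beta>))) = Dtx (P \<beta>)"
      by (metis fst_conv fst_map_prod)+
  qed
  moreover have "\<psi> (Dty h) = Dty (\<psi> h)" for h
  proof (rule commute[OF derivation_Dty Dty_pullback \<kappa>_Dy])
    fix \<beta> assume "\<beta> < r"
    with pullback_defining_form P show "Dty (w \<beta>) = \<iota> (snd (defining_form \<beta>))"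
      and "\<iota> (\<kappa> (snd (defining_form \<beta>))) = Dty (P \<beta>)"
      by (metis snd_conv snd_map_prod)+
  qed
  ultimately have "\<psi> \<in> sym_set (\<iota> ` B) Dtx Dty"
    unfolding sym_set_def using \<open>derivation \<psi>\<close> \<psi>_pullback \<kappa>_B linear_0[OF linear_pullback]
    by (auto simp: fun_eq_iff)
  with \<psi>_pullback show ?thesis
    by blast
qed

lemma CL_fin_dim_from_cover:
  assumes "CL_fin_dim Dtx Dty"
  shows "CL_fin_dim Dx Dy"
proof -
  obtain U where "finite U"
    and rep: "\<And>u. u \<in> closed_forms Dtx Dty \<Longrightarrow> \<exists>x\<in>span U. u - x \<in> exact_forms Dtx Dty"
    using CL_fin_dim_imp_span[OF assms] by blast
  have "\<exists>V. finite V \<and> V \<subseteq> closed_forms Dx Dy \<and>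
      (\<forall>u\<in>closed_forms Dx Dy. \<exists>v\<in>span V. map_prod \<iota> \<iota> (u - v) \<in> exact_forms Dtx Dty)"
  proof (rule finite_span_modulo_preimage[OF subspace_closed_forms[OF linear_Dx linear_Dy]
        linear_map_prod_pullback subspace_exact_forms[OF linear_Dtx linear_Dty] \<open>finite U\<close>])
    show "\<exists>x\<in>span U. map_prod \<iota> \<iota> u - x \<in> exact_forms Dtx Dty" if "u \<in> closed_forms Dx Dy" for u
      using rep pullback_closed_forms that by blast
  qed
  then obtain V where "finite V"
    and V: "\<And>u. u \<in> closed_forms Dx Dy \<Longrightarrow> \<exists>v\<in>span V. map_prod \<iota> \<iota> (u - v) \<in> exact_forms Dtx Dty"
    by blast
  have "finite (V \<union> defining_form ` {..<r})"
    using \<open>finite V\<close> by simp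
  moreover have "\<exists>v\<in>span (V \<union> defining_form ` {..<r}). u - v \<in> exact_forms Dx Dy" if u: "u \<in> closed_forms Dx Dy" for u
  proof -
    obtain v1 where v1: "v1 \<in> span V" "map_prod \<iota> \<iota> (u - v1) \<in> exact_forms Dtx Dty"
      using V[OF u] by blast
    then obtain v2 where v2: "v2 \<in> span (defining_form ` {..<r})" "u - v1 - v2 \<in> exact_forms Dx Dy"
      using exact_pullback_decomposition by blast
    have "v1 + v2 \<in> span (V \<union> defining_form ` {..<r})"
      using span_mono[of V "V \<union> defining_form ` {..<r}"] span_mono[of "defining_form ` {..<r}" "V \<union> defining_form ` {..<r}"]
        v1(1) v2(1) by (intro span_add) auto
    with v2(2) show ?thesis
      by (metis diff_diff_eq)
  qed
  ultimately show ?thesis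
    by (rule CL_fin_dimI)
qed

definition unobstructed_sym :: "'a set \<Rightarrow> ('a \<Rightarrow> 'a) set" where
  "unobstructed_sym B = {\<kappa> \<in> sym_set B Dx Dy. \<forall>\<alpha><r. obstruction \<alpha> \<kappa> \<in> exact_forms Dtx Dty}"

lemma subspace_unobstructed_sym: "subspace (unobstructed_sym B)"
proof -
  have "unobstructed_sym B = sym_set B Dx Dy \<inter> (\<Inter>\<alpha>\<in>{..<r}. obstruction \<alpha> -` exact_forms Dtx Dty)"
    unfolding unobstructed_sym_def by auto
  then show ?thesis
    using linear_Dtx linear_Dty by (simp add: subspace_inter subspace_sym_set linear_Dx linear_Dy subspace_Int
        linear_subspace_vimage linear_obstruction subspace_exact_forms)
qed

lemma unobstructed_sym_fin_dim:
  assumes "fin_dim_maps (sym_set (\<iota> ` B) Dtx Dty)"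
  shows "\<exists>V. finite V \<and> V \<subseteq> unobstructed_sym B \<and> unobstructed_sym B \<subseteq> span V"
proof -
  obtain Bs where "finite Bs" and Bs: "sym_set (\<iota> ` B) Dtx Dty \<subseteq> span Bs"
    using assms unfolding fin_dim_maps_iff_span by blast
  have lin_pre: "linear (\<lambda>\<psi> :: 'b \<Rightarrow> 'b. \<psi> \<circ> \<iota>)"
    by (intro linearI) (simp_all add: fun_eq_iff)
  have lin_post: "linear (\<lambda>\<kappa> :: 'a \<Rightarrow> 'a. \<iota> \<circ> \<kappa>)"
    by (intro linearI) (simp_all add: fun_eq_iff linear_add[OF linear_pullback] linear_scale[OF linear_pullback])
  have "(\<lambda>\<kappa>. \<iota> \<circ> \<kappa>) ` unobstructed_sym B \<subseteq> span ((\<lambda>\<psi>. \<psi> \<circ> \<iota>) ` Bs)"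
  proof
    fix \<chi> assume "\<chi> \<in> (\<lambda>\<kappa>. \<iota> \<circ> \<kappa>) ` unobstructed_sym B"
    then obtain \<kappa> where \<chi>: "\<chi> = \<iota> \<circ> \<kappa>" and "\<kappa> \<in> unobstructed_sym B"
      by blast
    then have "\<kappa> \<in> sym_set B Dx Dy" "\<And>\<alpha>. \<alpha> < r \<Longrightarrow> obstruction \<alpha> \<kappa> \<in> exact_forms Dtx Dty"
      unfolding unobstructed_sym_def by auto
    then obtain \<psi> where "\<psi> \<in> sym_set (\<iota> ` B) Dtx Dty" and "\<forall>f. \<psi> (\<iota> f) = \<iota> (\<kappa> f)"
      using lift_symmetry by blast
    moreover from this(2) have "\<chi> = \<psi> \<circ> \<iota>"
      unfolding \<chi> by (simp add: fun_eq_iff)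
    ultimately have "\<chi> \<in> (\<lambda>\<psi>. \<psi> \<circ> \<iota>) ` span Bs"
      using Bs by blast
    then show "\<chi> \<in> span ((\<lambda>\<psi>. \<psi> \<circ> \<iota>) ` Bs)"
      by (simp add: linear_span_image[OF lin_pre])
  qed
  moreover have "inj_on (\<lambda>\<kappa>. \<iota> \<circ> \<kappa>) (unobstructed_sym B)"
    using inj_pullback by (intro inj_onI) (simp add: fun_eq_iff inj_eq)
  ultimately show ?thesis
    using finite_imageI[OF \<open>finite Bs\<close>] by (intro finite_span_of_injective_image[OF subspace_unobstructed_sym lin_post])
qed

lemma sym_fin_dim_from_cover:
  assumes "fin_dim_maps (sym_set (\<iota> ` B) Dtx Dty)" and "CL_fin_dim Dtx Dty"
  shows "fin_dim_maps (sym_set B Dx Dy)"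
proof -
  have sub: "subspace (sym_set B Dx Dy)"
    using subspace_sym_set[OF linear_Dx linear_Dy] .
  have "\<exists>V. finite V \<and> V \<subseteq> sym_set B Dx Dy \<and> (\<forall>\<phi>\<in>sym_set B Dx Dy.
      \<exists>u\<in>span V. \<forall>\<alpha><r. obstruction \<alpha> (\<phi> - u) \<in> exact_forms Dtx Dty)"
    by (rule finite_span_modulo_exact[OF assms(2) linear_Dtx linear_Dty sub linear_obstruction])
      (rule obstruction_closed)
  then obtain V1 where "finite V1" "V1 \<subseteq> sym_set B Dx Dy"
    and rep: "\<And>\<phi>. \<phi> \<in> sym_set B Dx Dy \<Longrightarrow> \<exists>u\<in>span V1. \<forall>\<alpha><r. obstruction \<alpha> (\<phi> - u) \<in> exact_forms Dtx Dty"
    by blast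
  obtain V2 where "finite V2" and V2: "unobstructed_sym B \<subseteq> span V2"
    using unobstructed_sym_fin_dim[OF assms(1)] by blast
  have "\<phi> \<in> span (V1 \<union> V2)" if \<phi>: "\<phi> \<in> sym_set B Dx Dy" for \<phi>
  proof -
    obtain u where u: "u \<in> span V1" "\<forall>\<alpha><r. obstruction \<alpha> (\<phi> - u) \<in> exact_forms Dtx Dty"
      using rep[OF \<phi>] by blast
    have "u \<in> sym_set B Dx Dy"
      using span_minimal[OF \<open>V1 \<subseteq> sym_set B Dx Dy\<close> sub] u(1) by blast
    then have "\<phi> - u \<in> unobstructed_sym B"
      using subspace_diff[OF sub \<phi>] u(2) unfolding unobstructed_sym_def by blast
    then have "\<phi> - u \<in> span (V1 \<union> V2)"
      using V2 span_mono[of V2 "V1 \<union> V2"] by blast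
    moreover have "u \<in> span (V1 \<union> V2)"
      using u(1) span_mono[of V1 "V1 \<union> V2"] by blast
    ultimately have "u + (\<phi> - u) \<in> span (V1 \<union> V2)"
      by (rule span_add[rotated])
    then show ?thesis
      by simp
  qed
  moreover have "finite (V1 \<union> V2)"
    using \<open>finite V1\<close> \<open>finite V2\<close> by blast
  ultimately show ?thesis
    unfolding fin_dim_maps_iff_span by blast
qed

end

theorem mainTheorem8:
  fixes Dx Dy :: "'a::{real_algebra_1,comm_ring_1} \<Rightarrow> 'a"
    and B :: "'a set"
    and \<iota> :: "'a \<Rightarrow> 'b::{real_algebra_1,comm_ring_1}"
    and r :: nat and w :: "nat \<Rightarrow> 'b"
    and Dtx Dty :: "'b \<Rightarrow> 'b"
  assumes "total_derivs Dx Dy"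
    and "diff_connected Dx Dy"
    and "abelian_covering Dx Dy \<iota> r w Dtx Dty"
    and "diff_connected Dtx Dty"
  shows "(\<not> CL_fin_dim Dx Dy \<longrightarrow> \<not> CL_fin_dim Dtx Dty)
       \<and> (\<not> fin_dim_maps (sym_set B Dx Dy) \<longrightarrow>
            \<not> fin_dim_maps (sym_set (\<iota> ` B) Dtx Dty) \<or> \<not> CL_fin_dim Dtx Dty)"
proof -
  interpret abelian_cover Dx Dy \<iota> r w Dtx Dty
    using assms(3,4) by unfold_locales
  show ?thesis
    using CL_fin_dim_from_cover sym_fin_dim_from_cover by blast
qed

end
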